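(* Let $G$ be a finite group and let $\Gamma \le G$ be a subgroup. Then $\|\Gamma\|_W \le 1$, where $\Gamma$ is identified with its indicator function $\Gamma: G\to\{0,1\}$.
   Context: Let $\widehat{G}$ be a complete set of pairwise non-isomorphic irreducible unitary representations of $G$, and for $\rho\in\widehat G$ let $d_\rho$ be its dimension. For $f:G\to\mathbb{C}$ the Fourier transform at $\rho$ is the matrix $\widehat f(\rho)=\sum_{g\in G} f(g)\rho(g)$. For a matrix $M$, $\|M\| = \sqrt{\mathrm{tr}(MM^* )}$ is the Hilbert–Schmidt norm. The Wiener norm of $f$ is $\|f\|_W = \frac{1}{|G|}\sum_{\rho\in\widehat G} d_\rho \|\widehat f(\rho)\|$. *)

theory Defs
  imports "HOL-Algebra.Group" "Jordan_Normal_Form.Schur_Decomposition"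
begin

definition mtrace :: "complex mat \<Rightarrow> complex" where
  "mtrace M = (\<Sum>i<dim_row M. M $$ (i,i))"

definition hs_norm :: "complex mat \<Rightarrow> real" where
  "hs_norm M = sqrt (Re (mtrace (M * mat_adjoint M)))"

definition unitary_rep :: "('g, 'b) monoid_scheme \<Rightarrow> nat \<Rightarrow> ('g \<Rightarrow> complex mat) \<Rightarrow> bool" where
  "unitary_rep G d \<rho> \<longleftrightarrow> d > 0 \<and>
     (\<forall>g\<in>carrier G. \<rho> g \<in> carrier_mat d d \<and> \<rho> g * mat_adjoint (\<rho> g) = 1\<^sub>m d) \<and>
     (\<forall>g\<in>carrier G. \<forall>h\<in>carrier G. \<rho> (g \<otimes>\<^bsub>G\<^esub> h) = \<rho> g * \<rho> h)"

definition subspace_vec :: "nat \<Rightarrow> complex vec set \<Rightarrow> bool" where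
  "subspace_vec d W \<longleftrightarrow> W \<subseteq> carrier_vec d \<and> 0\<^sub>v d \<in> W \<and>
     (\<forall>v\<in>W. \<forall>w\<in>W. v + w \<in> W) \<and> (\<forall>c. \<forall>v\<in>W. c \<cdot>\<^sub>v v \<in> W)"

definition irreducible_rep :: "('g, 'b) monoid_scheme \<Rightarrow> nat \<Rightarrow> ('g \<Rightarrow> complex mat) \<Rightarrow> bool" where
  "irreducible_rep G d \<rho> \<longleftrightarrow>
     (\<forall>W. subspace_vec d W \<and> (\<forall>g\<in>carrier G. \<forall>v\<in>W. \<rho> g *\<^sub>v v \<in> W)
          \<longrightarrow> W = {0\<^sub>v d} \<or> W = carrier_vec d)"

definition iso_rep :: "('g, 'b) monoid_scheme \<Rightarrow> nat \<Rightarrow> ('g \<Rightarrow> complex mat) \<Rightarrow> nat \<Rightarrow> ('g \<Rightarrow> complex mat) \<Rightarrow> bool" where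
  "iso_rep G d \<rho> e \<sigma> \<longleftrightarrow> d = e \<and>
     (\<exists>T \<in> carrier_mat d d. invertible_mat T \<and> (\<forall>g\<in>carrier G. T * \<rho> g = \<sigma> g * T))"

definition complete_irreps :: "('g, 'b) monoid_scheme \<Rightarrow> (nat \<times> ('g \<Rightarrow> complex mat)) set \<Rightarrow> bool" where
  "complete_irreps G R \<longleftrightarrow>
     (\<forall>(d,\<rho>)\<in>R. unitary_rep G d \<rho> \<and> irreducible_rep G d \<rho>) \<and>
     (\<forall>(d,\<rho>)\<in>R. \<forall>(e,\<sigma>)\<in>R. iso_rep G d \<rho> e \<sigma> \<longrightarrow> (d,\<rho>) = (e,\<sigma>)) \<and>
     (\<forall>d \<rho>. unitary_rep G d \<rho> \<and> irreducible_rep G d \<rho> \<longrightarrow> (\<exists>(e,\<sigma>)\<in>R. iso_rep G d \<rho> e \<sigma>))"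

definition fourier :: "('g, 'b) monoid_scheme \<Rightarrow> ('g \<Rightarrow> complex) \<Rightarrow> nat \<Rightarrow> ('g \<Rightarrow> complex mat) \<Rightarrow> complex mat" where
  "fourier G f d \<rho> = mat d d (\<lambda>(i,j). \<Sum>g\<in>carrier G. f g * \<rho> g $$ (i,j))"

definition wiener_norm :: "('g, 'b) monoid_scheme \<Rightarrow> (nat \<times> ('g \<Rightarrow> complex mat)) set \<Rightarrow> ('g \<Rightarrow> complex) \<Rightarrow> real" where
  "wiener_norm G R f = (1 / real (card (carrier G))) *
     (\<Sum>(d,\<rho>)\<in>R. real d * hs_norm (fourier G f d \<rho>))"

end

theory Submission
  imports Defs "HOL-Analysis.Convex"
begin

(* Write F = fourier G 1_H d rho = (sum over h in H of rho h). Since h' |-> h h' permutes H,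
   F * F = |H| F, and submultiplicativity of the Hilbert-Schmidt norm gives
   |H| ||F|| = ||F * F|| <= ||F||^2.  By Schur orthogonality the conjugated matrix coefficients
   of the representations in R are orthogonal in l^2(G), those of rho having squared norm |G|/d,
   so Bessel's inequality gives  sum_rho d ||F_rho||^2 <= |G| * sum_g |1_H g|^2 = |G| |H|.
   Together:  ||1_H||_W <= (1/|G|) sum_rho d ||F_rho||^2 / |H| <= 1. *)

section \<open>Matrices and the Hilbert-Schmidt norm\<close>

lemma index_mult_mat_sum:
  assumes "A \<in> carrier_mat n m" "B \<in> carrier_mat m p" "i < n" "j < p"
  shows "(A * B) $$ (i,j) = (\<Sum>k<m. A $$ (i,k) * B $$ (k,j))"
  using assms by (simp add: scalar_prod_def lessThan_atLeast0)

lemma dim_mat_adjoint [simp]: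
  "dim_row (mat_adjoint A) = dim_col A" "dim_col (mat_adjoint A) = dim_row A"
  by (auto simp: mat_adjoint_def)

lemma index_mat_adjoint [simp]:
  fixes A :: "complex mat"
  assumes "i < dim_col A" "j < dim_row A"
  shows "mat_adjoint A $$ (i,j) = cnj (A $$ (j,i))"
  using assms by (simp add: mat_adjoint_def mat_of_rows_def)

lemma mat_adjoint_carrier: "A \<in> carrier_mat n m \<Longrightarrow> mat_adjoint A \<in> carrier_mat m n"
  unfolding carrier_mat_def by simp

lemma mat_adjoint_adjoint [simp]: "mat_adjoint (mat_adjoint (A :: complex mat)) = A"
  by (rule eq_matI) auto

lemma mat_adjoint_mult:
  fixes A B :: "complex mat"
  assumes A: "A \<in> carrier_mat n m" and B: "B \<in> carrier_mat m p"
  shows "mat_adjoint (A * B) = mat_adjoint B * mat_adjoint A"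
proof (rule eq_matI)
  have A': "mat_adjoint A \<in> carrier_mat m n" and B': "mat_adjoint B \<in> carrier_mat p m"
    using A B by (auto intro: mat_adjoint_carrier)
  fix i j assume "i < dim_row (mat_adjoint B * mat_adjoint A)" "j < dim_col (mat_adjoint B * mat_adjoint A)"
  hence i: "i < p" and j: "j < n" using A' B' by auto
  have "mat_adjoint (A * B) $$ (i, j) = (\<Sum>k<m. cnj (A $$ (j,k)) * cnj (B $$ (k,i)))"
    using A B i j by (simp add: index_mult_mat_sum[OF A B j i])
  also have "\<dots> = (mat_adjoint B * mat_adjoint A) $$ (i,j)"
    using A B i j by (auto simp: index_mult_mat_sum[OF B' A' i j] intro: sum.cong)
  finally show "mat_adjoint (A * B) $$ (i, j) = (mat_adjoint B * mat_adjoint A) $$ (i, j)" .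
qed (use A B in auto)

lemma index_mult_mat_adjoint_diag:
  fixes T :: "complex mat"
  assumes T: "T \<in> carrier_mat d e"
  shows "a < d \<Longrightarrow> (T * mat_adjoint T) $$ (a,a) = of_real (\<Sum>k<e. (cmod (T $$ (a,k)))\<^sup>2)"
    and "b < e \<Longrightarrow> (mat_adjoint T * T) $$ (b,b) = of_real (\<Sum>k<d. (cmod (T $$ (k,b)))\<^sup>2)"
proof -
  have T': "mat_adjoint T \<in> carrier_mat e d"
    using T by (rule mat_adjoint_carrier)
  show "(T * mat_adjoint T) $$ (a,a) = of_real (\<Sum>k<e. (cmod (T $$ (a,k)))\<^sup>2)" if "a < d"
    unfolding index_mult_mat_sum[OF T T' that that] of_real_sum complex_norm_square
    using T that by (auto intro: sum.cong)
  show "(mat_adjoint T * T) $$ (b,b) = of_real (\<Sum>k<d. (cmod (T $$ (k,b)))\<^sup>2)" if "b < e"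
    unfolding index_mult_mat_sum[OF T' T that that] of_real_sum complex_norm_square
    using T that by (auto simp: mult.commute intro: sum.cong)
qed

lemma cmod_sum_mult_square_le:
  fixes a b :: "'i \<Rightarrow> complex"
  shows "(cmod (\<Sum>k\<in>K. a k * b k))\<^sup>2 \<le> (\<Sum>k\<in>K. (cmod (a k))\<^sup>2) * (\<Sum>k\<in>K. (cmod (b k))\<^sup>2)"
proof -
  have "cmod (\<Sum>k\<in>K. a k * b k) \<le> (\<Sum>k\<in>K. cmod (a k) * cmod (b k))"
    unfolding norm_mult[symmetric] by (rule norm_sum)
  hence "(cmod (\<Sum>k\<in>K. a k * b k))\<^sup>2 \<le> (\<Sum>k\<in>K. cmod (a k) * cmod (b k))\<^sup>2"
    by (simp add: power_mono)
  also have "\<dots> \<le> (\<Sum>k\<in>K. (cmod (a k))\<^sup>2) * (\<Sum>k\<in>K. (cmod (b k))\<^sup>2)"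
    by (rule Cauchy_Schwarz_ineq_sum)
  finally show ?thesis .
qed

lemma hs_norm_eq:
  assumes A: "A \<in> carrier_mat n m"
  shows "hs_norm A = sqrt (\<Sum>i<n. \<Sum>j<m. (cmod (A $$ (i,j)))\<^sup>2)"
proof -
  have "dim_row (A * mat_adjoint A) = n"
    using A by simp
  hence "mtrace (A * mat_adjoint A) = of_real (\<Sum>i<n. \<Sum>j<m. (cmod (A $$ (i,j)))\<^sup>2)"
    unfolding mtrace_def of_real_sum
    by (auto simp del: index_mult_mat simp: index_mult_mat_adjoint_diag(1)[OF A] intro: sum.cong)
  thus ?thesis
    unfolding hs_norm_def by simp
qed

lemma hs_norm_nonneg: "hs_norm A \<ge> 0"
  by (simp add: hs_norm_eq[of A "dim_row A" "dim_col A"] sum_nonneg)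

lemma hs_norm_square:
  assumes A: "A \<in> carrier_mat n m"
  shows "(hs_norm A)\<^sup>2 = (\<Sum>i<n. \<Sum>j<m. (cmod (A $$ (i,j)))\<^sup>2)"
  by (simp add: hs_norm_eq[OF A] sum_nonneg)

lemma hs_norm_smult: "hs_norm (c \<cdot>\<^sub>m A) = cmod c * hs_norm A"
proof -
  have A: "A \<in> carrier_mat (dim_row A) (dim_col A)" by simp
  have "(hs_norm (c \<cdot>\<^sub>m A))\<^sup>2 = (cmod c * hs_norm A)\<^sup>2"
    by (simp add: hs_norm_square[OF A] hs_norm_square[of _ "dim_row A" "dim_col A"]
        norm_mult power_mult_distrib sum_distrib_left)
  thus ?thesis
    by (simp add: hs_norm_nonneg)
qed

lemma hs_norm_mult_le:
  assumes A: "A \<in> carrier_mat n m" and B: "B \<in> carrier_mat m p"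
  shows "hs_norm (A * B) \<le> hs_norm A * hs_norm B"
proof -
  have "(hs_norm (A * B))\<^sup>2 = (\<Sum>i<n. \<Sum>k<p. (cmod (\<Sum>j<m. A $$ (i,j) * B $$ (j,k)))\<^sup>2)"
    using A B by (simp add: hs_norm_square[of _ n p] index_mult_mat_sum[OF A B] del: index_mult_mat)
  also have "\<dots> \<le> (\<Sum>i<n. \<Sum>k<p. (\<Sum>j<m. (cmod (A $$ (i,j)))\<^sup>2) * (\<Sum>j<m. (cmod (B $$ (j,k)))\<^sup>2))"
    by (intro sum_mono cmod_sum_mult_square_le)
  also have "\<dots> = (hs_norm A)\<^sup>2 * (hs_norm B)\<^sup>2"
    by (simp add: hs_norm_square[OF A] hs_norm_square[OF B] sum_product sum.swap[of _ "{..<p}"])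
  also have "\<dots> = (hs_norm A * hs_norm B)\<^sup>2"
    by (simp add: power_mult_distrib)
  finally show ?thesis
    by (rule power2_le_imp_le) (simp add: hs_norm_nonneg)
qed

lemma sum_Sigma_cmod_square_hs_norm:
  fixes M :: "'k \<Rightarrow> complex mat" and n :: "'k \<Rightarrow> nat" and w :: "'k \<Rightarrow> real"
  assumes K: "finite K" and M: "\<And>k. k \<in> K \<Longrightarrow> M k \<in> carrier_mat (n k) (n k)"
  shows "(\<Sum>(k,i,j)\<in>Sigma K (\<lambda>k. {..<n k} \<times> {..<n k}). w k * (cmod (M k $$ (i,j)))\<^sup>2)
    = (\<Sum>k\<in>K. w k * (hs_norm (M k))\<^sup>2)"
proof -
  have "(\<Sum>(k,i,j)\<in>Sigma K (\<lambda>k. {..<n k} \<times> {..<n k}). w k * (cmod (M k $$ (i,j)))\<^sup>2)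
      = (\<Sum>k\<in>K. \<Sum>(i,j)\<in>{..<n k} \<times> {..<n k}. w k * (cmod (M k $$ (i,j)))\<^sup>2)"
    using K by (subst sum.Sigma) auto
  also have "\<dots> = (\<Sum>k\<in>K. w k * (hs_norm (M k))\<^sup>2)"
    by (intro sum.cong refl)
       (simp add: hs_norm_square[OF M] sum.cartesian_product' sum_distrib_left)
  finally show ?thesis .
qed

lemma hs_norm_le_square_div_of_mult_self:
  assumes A: "A \<in> carrier_mat n n" and m: "m > 0" and AA: "A * A = complex_of_real m \<cdot>\<^sub>m A"
  shows "hs_norm A \<le> (hs_norm A)\<^sup>2 / m"
proof -
  have "m * hs_norm A = hs_norm (A * A)"
    using m by (simp add: AA hs_norm_smult)
  also have "\<dots> \<le> hs_norm A * hs_norm A"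
    by (rule hs_norm_mult_le[OF A A])
  finally show ?thesis
    using m by (simp add: field_simps power2_eq_square)
qed

section \<open>Unitary representations and Schur's lemma\<close>

lemma unitary_rep_carrier: "unitary_rep G d \<rho> \<Longrightarrow> g \<in> carrier G \<Longrightarrow> \<rho> g \<in> carrier_mat d d"
  unfolding unitary_rep_def by auto

lemma unitary_rep_unitary:
  "unitary_rep G d \<rho> \<Longrightarrow> g \<in> carrier G \<Longrightarrow> \<rho> g * mat_adjoint (\<rho> g) = 1\<^sub>m d"
  unfolding unitary_rep_def by auto

lemma unitary_rep_mult:
  "unitary_rep G d \<rho> \<Longrightarrow> g \<in> carrier G \<Longrightarrow> h \<in> carrier G \<Longrightarrow> \<rho> (g \<otimes>\<^bsub>G\<^esub> h) = \<rho> g * \<rho> h"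
  unfolding unitary_rep_def by auto

lemma unitary_rep_dim_pos: "unitary_rep G d \<rho> \<Longrightarrow> d > 0"
  unfolding unitary_rep_def by auto

lemma unitary_rep_one:
  fixes G (structure)
  assumes G: "group G" and \<rho>: "unitary_rep G d \<rho>"
  shows "\<rho> \<one>\<^bsub>G\<^esub> = 1\<^sub>m d"
proof -
  interpret group G by fact
  have c: "\<rho> \<one> \<in> carrier_mat d d" and ca: "mat_adjoint (\<rho> \<one>) \<in> carrier_mat d d"
    using unitary_rep_carrier[OF \<rho>] mat_adjoint_carrier by auto
  have "1\<^sub>m d = (\<rho> \<one> * \<rho> \<one>) * mat_adjoint (\<rho> \<one>)"
    using unitary_rep_unitary[OF \<rho>] unitary_rep_mult[OF \<rho>, of \<one> \<one>] by simp
  also have "\<dots> = \<rho> \<one> * (\<rho> \<one> * mat_adjoint (\<rho> \<one>))"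
    using c ca by simp
  also have "\<dots> = \<rho> \<one>"
    using unitary_rep_unitary[OF \<rho>] c by simp
  finally show ?thesis by simp
qed

lemma unitary_rep_inv:
  fixes G (structure)
  assumes G: "group G" and \<rho>: "unitary_rep G d \<rho>" and g: "g \<in> carrier G"
  shows "\<rho> (inv\<^bsub>G\<^esub> g) = mat_adjoint (\<rho> g)"
proof -
  interpret group G by fact
  have c: "\<rho> g \<in> carrier_mat d d" and ci: "\<rho> (inv g) \<in> carrier_mat d d"
    and ca: "mat_adjoint (\<rho> g) \<in> carrier_mat d d"
    using unitary_rep_carrier[OF \<rho>] mat_adjoint_carrier g by auto
  have "\<rho> (inv g) = \<rho> (inv g) * (\<rho> g * mat_adjoint (\<rho> g))"
    using unitary_rep_unitary[OF \<rho> g] ci by simp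
  also have "\<dots> = (\<rho> (inv g) * \<rho> g) * mat_adjoint (\<rho> g)"
    using c ci ca by simp
  also have "\<rho> (inv g) * \<rho> g = 1\<^sub>m d"
    using unitary_rep_mult[OF \<rho>, of "inv g" g] g unitary_rep_one[OF G \<rho>] by simp
  finally show ?thesis
    using left_mult_one_mat[OF ca] by simp
qed

lemma unitary_rep_adjoint_unitary:
  fixes G (structure)
  assumes G: "group G" and \<rho>: "unitary_rep G d \<rho>" and g: "g \<in> carrier G"
  shows "mat_adjoint (\<rho> g) * \<rho> g = 1\<^sub>m d"
proof -
  interpret group G by fact
  have "mat_adjoint (\<rho> g) * \<rho> g = \<rho> (inv g \<otimes> g)"
    using unitary_rep_mult[OF \<rho>, of "inv g" g] unitary_rep_inv[OF G \<rho> g] g by simp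
  also have "\<dots> = 1\<^sub>m d"
    using unitary_rep_one[OF G \<rho>] g by simp
  finally show ?thesis .
qed

lemma complex_mat_has_eigenvector:
  assumes A: "(A :: complex mat) \<in> carrier_mat d d" and d: "d > 0"
  obtains v c where "eigenvector A v c"
proof -
  have "degree (char_poly A) = d"
    using degree_monic_char_poly[OF A] by simp
  hence "\<not> constant (poly (char_poly A))"
    using d constant_degree[of "char_poly A"] by simp
  then obtain c where "poly (char_poly A) c = 0"
    using fundamental_theorem_of_algebra by blast
  thus ?thesis
    using eigenvalue_root_char_poly[OF A] that unfolding eigenvalue_def by blast
qed

lemma subspace_vec_eigenspace:
  assumes S: "S \<in> carrier_mat d d"
  shows "subspace_vec d {w \<in> carrier_vec d. S *\<^sub>v w = c \<cdot>\<^sub>v w}"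
  unfolding subspace_vec_def
proof (intro conjI ballI allI)
  fix v w assume "v \<in> {w \<in> carrier_vec d. S *\<^sub>v w = c \<cdot>\<^sub>v w}" "w \<in> {w \<in> carrier_vec d. S *\<^sub>v w = c \<cdot>\<^sub>v w}"
  thus "v + w \<in> {w \<in> carrier_vec d. S *\<^sub>v w = c \<cdot>\<^sub>v w}"
    by (auto simp: mult_add_distrib_mat_vec[OF S] smult_add_distrib_vec)
next
  fix a w assume "w \<in> {w \<in> carrier_vec d. S *\<^sub>v w = c \<cdot>\<^sub>v w}"
  thus "a \<cdot>\<^sub>v w \<in> {w \<in> carrier_vec d. S *\<^sub>v w = c \<cdot>\<^sub>v w}"
    by (auto simp: mult_mat_vec[OF S] smult_smult_assoc mult.commute)
qed (use S in auto)

lemma schur_lemma_scalar: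
  assumes irr: "irreducible_rep G d \<rho>" and d: "d > 0" and S: "S \<in> carrier_mat d d"
    and \<rho>: "\<And>g. g \<in> carrier G \<Longrightarrow> \<rho> g \<in> carrier_mat d d"
    and comm: "\<And>g. g \<in> carrier G \<Longrightarrow> \<rho> g * S = S * \<rho> g"
  shows "\<exists>c. S = c \<cdot>\<^sub>m 1\<^sub>m d"
proof -
  obtain v c where ev: "eigenvector S v c"
    using complex_mat_has_eigenvector[OF S d] .
  define W where "W = {w \<in> carrier_vec d. S *\<^sub>v w = c \<cdot>\<^sub>v w}"
  have invariant: "\<rho> g *\<^sub>v w \<in> W" if g: "g \<in> carrier G" and w: "w \<in> W" for g w
  proof -
    have wc: "w \<in> carrier_vec d" "S *\<^sub>v w = c \<cdot>\<^sub>v w"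
      using w unfolding W_def by auto
    have "S *\<^sub>v (\<rho> g *\<^sub>v w) = (\<rho> g * S) *\<^sub>v w"
      using S \<rho>[OF g] wc comm[OF g] by simp
    also have "\<dots> = c \<cdot>\<^sub>v (\<rho> g *\<^sub>v w)"
      using S \<rho>[OF g] wc by (simp add: mult_mat_vec)
    finally show ?thesis
      unfolding W_def using \<rho>[OF g] wc by auto
  qed
  have "v \<in> W" "v \<noteq> 0\<^sub>v d"
    using ev S unfolding W_def eigenvector_def by auto
  hence W: "W = carrier_vec d"
    using irr subspace_vec_eigenspace[OF S] invariant
    unfolding irreducible_rep_def W_def by blast
  have "S = c \<cdot>\<^sub>m 1\<^sub>m d"
  proof (rule eq_matI)
    fix i j assume i: "i < dim_row (c \<cdot>\<^sub>m 1\<^sub>m d)" and j: "j < dim_col (c \<cdot>\<^sub>m 1\<^sub>m d)"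
    have "unit_vec d j \<in> W"
      using W by simp
    hence "S *\<^sub>v unit_vec d j = c \<cdot>\<^sub>v unit_vec d j"
      unfolding W_def by simp
    hence "(S *\<^sub>v unit_vec d j) $ i = (c \<cdot>\<^sub>v unit_vec d j) $ i"
      by simp
    thus "S $$ (i, j) = (c \<cdot>\<^sub>m 1\<^sub>m d) $$ (i, j)"
      using i j S by simp
  qed (use S in auto)
  thus ?thesis by blast
qed

lemma invertible_if_gram_scalar:
  fixes T :: "complex mat"
  assumes T: "T \<in> carrier_mat d e" and T0: "T \<noteq> 0\<^sub>m d e"
    and c1: "T * mat_adjoint T = c1 \<cdot>\<^sub>m 1\<^sub>m d" and c2: "mat_adjoint T * T = c2 \<cdot>\<^sub>m 1\<^sub>m e"
  shows "d = e" and "invertible_mat T"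
proof -
  have T': "mat_adjoint T \<in> carrier_mat e d"
    using T by (rule mat_adjoint_carrier)
  obtain i k where i: "i < d" and k: "k < e" and Tik: "T $$ (i,k) \<noteq> 0"
    using T T0 by (metis carrier_matD eq_matI index_zero_mat)
  have "of_real (\<Sum>m<e. (cmod (T $$ (i,m)))\<^sup>2) = c1"
    using index_mult_mat_adjoint_diag(1)[OF T i] c1 i by simp
  moreover have "(\<Sum>m<e. (cmod (T $$ (i,m)))\<^sup>2) > 0"
    using k Tik by (intro sum_pos2[of _ k]) auto
  ultimately have c1_nz: "c1 \<noteq> 0"
    by (metis of_real_eq_0_iff less_irrefl)
  (* (T T^H) T = T (T^H T) forces c1 = c2, and comparing the traces of T T^H and T^H T gives d = e. *)
  have "c1 \<cdot>\<^sub>m T = (T * mat_adjoint T) * T"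
    using mult_smult_assoc_mat[OF one_carrier_mat T, of c1] T by (simp add: c1)
  also have "\<dots> = T * (mat_adjoint T * T)"
    using T T' by simp
  also have "\<dots> = c2 \<cdot>\<^sub>m T"
    using mult_smult_distrib[OF T one_carrier_mat, of c2] T by (simp add: c2)
  finally have "c1 * T $$ (i,k) = c2 * T $$ (i,k)"
    by (metis T i k carrier_matD index_smult_mat(1))
  hence c12: "c1 = c2"
    using Tik by simp
  have "of_nat d * c1 = (\<Sum>a<d. (T * mat_adjoint T) $$ (a,a))"
    by (simp add: c1)
  also have "\<dots> = (\<Sum>a<d. \<Sum>m<e. of_real ((cmod (T $$ (a,m)))\<^sup>2))"
    by (intro sum.cong) (simp_all add: index_mult_mat_adjoint_diag(1)[OF T])
  also have "\<dots> = (\<Sum>b<e. (mat_adjoint T * T) $$ (b,b))"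
    by (subst sum.swap) (intro sum.cong, simp_all add: index_mult_mat_adjoint_diag(2)[OF T])
  also have "\<dots> = of_nat e * c1"
    by (simp add: c2 c12)
  finally show de: "d = e"
    using c1_nz by simp
  show "invertible_mat T"
    unfolding invertible_mat_def inverts_mat_def
  proof (intro conjI exI)
    show "square_mat T"
      using T de by simp
    have unscale: "(1 / c1) \<cdot>\<^sub>m (c1 \<cdot>\<^sub>m 1\<^sub>m n) = 1\<^sub>m n" for n
      by (rule eq_matI) (auto simp: c1_nz)
    show "T * ((1 / c1) \<cdot>\<^sub>m mat_adjoint T) = 1\<^sub>m (dim_row T)"
      using mult_smult_distrib[OF T T', of "1 / c1"] T by (simp add: c1 unscale)
    show "(1 / c1) \<cdot>\<^sub>m mat_adjoint T * T = 1\<^sub>m (dim_row ((1 / c1) \<cdot>\<^sub>m mat_adjoint T))"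
      using mult_smult_assoc_mat[OF T' T, of "1 / c1"] T T' by (simp add: c2 unscale flip: c12)
  qed
qed

lemma intertwiner_adjoint:
  fixes G (structure)
  assumes G: "group G" and \<rho>: "unitary_rep G d \<rho>" and \<sigma>: "unitary_rep G e \<sigma>"
    and T: "T \<in> carrier_mat d e"
    and tw: "\<And>h. h \<in> carrier G \<Longrightarrow> \<rho> h * T = T * \<sigma> h"
    and h: "h \<in> carrier G"
  shows "\<sigma> h * mat_adjoint T = mat_adjoint T * \<rho> h"
proof -
  interpret group G by fact
  have ih: "inv h \<in> carrier G"
    using h by simp
  have "mat_adjoint T * \<rho> h = mat_adjoint (\<rho> (inv h) * T)"
    using mat_adjoint_mult[OF unitary_rep_carrier[OF \<rho> ih] T] unitary_rep_inv[OF G \<rho> h] by simp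
  also have "\<dots> = mat_adjoint (T * \<sigma> (inv h))"
    using tw[OF ih] by simp
  also have "\<dots> = \<sigma> h * mat_adjoint T"
    using mat_adjoint_mult[OF T unitary_rep_carrier[OF \<sigma> ih]] unitary_rep_inv[OF G \<sigma> h] by simp
  finally show ?thesis ..
qed

lemma schur_lemma_intertwiner_zero:
  assumes G: "group G"
    and \<rho>: "unitary_rep G d \<rho>" and \<rho>_irr: "irreducible_rep G d \<rho>"
    and \<sigma>: "unitary_rep G e \<sigma>" and \<sigma>_irr: "irreducible_rep G e \<sigma>"
    and not_iso: "\<not> iso_rep G e \<sigma> d \<rho>"
    and T: "T \<in> carrier_mat d e"
    and tw: "\<And>h. h \<in> carrier G \<Longrightarrow> \<rho> h * T = T * \<sigma> h"
  shows "T = 0\<^sub>m d e"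
proof (rule ccontr)
  assume T0: "T \<noteq> 0\<^sub>m d e"
  have T': "mat_adjoint T \<in> carrier_mat e d"
    using T by (rule mat_adjoint_carrier)
  have tw': "\<sigma> h * mat_adjoint T = mat_adjoint T * \<rho> h" if h: "h \<in> carrier G" for h
    by (rule intertwiner_adjoint[OF G \<rho> \<sigma> T]) (use tw h in auto)
  have "\<exists>c. T * mat_adjoint T = c \<cdot>\<^sub>m 1\<^sub>m d"
  proof (rule schur_lemma_scalar[OF \<rho>_irr unitary_rep_dim_pos[OF \<rho>]])
    fix h assume h: "h \<in> carrier G"
    have \<rho>h: "\<rho> h \<in> carrier_mat d d" and \<sigma>h: "\<sigma> h \<in> carrier_mat e e"
      using unitary_rep_carrier[OF \<rho> h] unitary_rep_carrier[OF \<sigma> h] .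
    have "\<rho> h * (T * mat_adjoint T) = T * (\<sigma> h * mat_adjoint T)"
      using \<rho>h \<sigma>h T T' tw[OF h] by (simp flip: assoc_mult_mat)
    also have "\<dots> = T * mat_adjoint T * \<rho> h"
      using \<rho>h T T' tw'[OF h] by simp
    finally show "\<rho> h * (T * mat_adjoint T) = T * mat_adjoint T * \<rho> h" .
  qed (use T T' unitary_rep_carrier[OF \<rho>] in auto)
  then obtain c1 where c1: "T * mat_adjoint T = c1 \<cdot>\<^sub>m 1\<^sub>m d" ..
  have "\<exists>c. mat_adjoint T * T = c \<cdot>\<^sub>m 1\<^sub>m e"
  proof (rule schur_lemma_scalar[OF \<sigma>_irr unitary_rep_dim_pos[OF \<sigma>]])
    fix h assume h: "h \<in> carrier G"
    have \<rho>h: "\<rho> h \<in> carrier_mat d d" and \<sigma>h: "\<sigma> h \<in> carrier_mat e e"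
      using unitary_rep_carrier[OF \<rho> h] unitary_rep_carrier[OF \<sigma> h] .
    have "\<sigma> h * (mat_adjoint T * T) = mat_adjoint T * (\<rho> h * T)"
      using \<rho>h \<sigma>h T T' tw'[OF h] by (simp flip: assoc_mult_mat)
    also have "\<dots> = mat_adjoint T * T * \<sigma> h"
      using \<sigma>h T T' tw[OF h] by simp
    finally show "\<sigma> h * (mat_adjoint T * T) = mat_adjoint T * T * \<sigma> h" .
  qed (use T T' unitary_rep_carrier[OF \<sigma>] in auto)
  then obtain c2 where c2: "mat_adjoint T * T = c2 \<cdot>\<^sub>m 1\<^sub>m e" ..
  have "iso_rep G e \<sigma> d \<rho>"
    unfolding iso_rep_def
    using invertible_if_gram_scalar[OF T T0 c1 c2] T tw by auto
  with not_iso show False ..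
qed

section \<open>Schur orthogonality\<close>

lemma sum_subgroup_left_translate:
  fixes G (structure)
  assumes G: "group G" and H: "subgroup H G" and h: "h \<in> H"
  shows "(\<Sum>g\<in>H. F (h \<otimes> g)) = (\<Sum>g\<in>H. F g)"
proof -
  interpret group G by fact
  show ?thesis
    by (rule sum.reindex_bij_witness[where i="\<lambda>g. inv h \<otimes> g" and j="\<lambda>g. h \<otimes> g"])
       (use h in \<open>auto simp: m_assoc[symmetric] subgroup.m_closed[OF H] subgroup.m_inv_closed[OF H]
          subgroup.mem_carrier[OF H]\<close>)
qed

(* Entrywise form of the average  sum_g rho g * E_jl * (sigma g)^-1  of the matrix unit E_jl
   (for unitary sigma), which intertwines sigma with rho. *)
definition schur_avg ::
  "('g, 'b) monoid_scheme \<Rightarrow> ('g \<Rightarrow> complex mat) \<Rightarrow> ('g \<Rightarrow> complex mat) \<Rightarrow> nat \<Rightarrow> nat \<Rightarrow> nat \<Rightarrow> nat \<Rightarrow> complex mat"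
where
  "schur_avg G \<rho> \<sigma> d e j l = mat d e (\<lambda>(i,k). \<Sum>g\<in>carrier G. \<rho> g $$ (i,j) * cnj (\<sigma> g $$ (k,l)))"

lemma schur_avg_carrier: "schur_avg G \<rho> \<sigma> d e j l \<in> carrier_mat d e"
  by (simp add: schur_avg_def)

lemma dim_schur_avg [simp]:
  "dim_row (schur_avg G \<rho> \<sigma> d e j l) = d" "dim_col (schur_avg G \<rho> \<sigma> d e j l) = e"
  by (simp_all add: schur_avg_def)

lemma index_schur_avg:
  "i < d \<Longrightarrow> k < e \<Longrightarrow>
    schur_avg G \<rho> \<sigma> d e j l $$ (i,k) = (\<Sum>g\<in>carrier G. \<rho> g $$ (i,j) * cnj (\<sigma> g $$ (k,l)))"
  by (simp add: schur_avg_def)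

lemma index_mult_schur_avg_left:
  fixes G (structure)
  assumes \<rho>: "unitary_rep G d \<rho>" and h: "h \<in> carrier G" and i: "i < d" and k: "k < e" and j: "j < d"
  shows "(\<rho> h * schur_avg G \<rho> \<sigma> d e j l) $$ (i,k) =
    (\<Sum>g\<in>carrier G. \<rho> (h \<otimes> g) $$ (i,j) * cnj (\<sigma> g $$ (k,l)))"
proof -
  have \<rho>h: "\<rho> h \<in> carrier_mat d d"
    using unitary_rep_carrier[OF \<rho> h] .
  have "(\<rho> h * schur_avg G \<rho> \<sigma> d e j l) $$ (i,k) =
      (\<Sum>m<d. \<rho> h $$ (i,m) * (\<Sum>g\<in>carrier G. \<rho> g $$ (m,j) * cnj (\<sigma> g $$ (k,l))))"
    unfolding index_mult_mat_sum[OF \<rho>h schur_avg_carrier i k] by (simp add: index_schur_avg k)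
  also have "\<dots> = (\<Sum>g\<in>carrier G. (\<Sum>m<d. \<rho> h $$ (i,m) * \<rho> g $$ (m,j)) * cnj (\<sigma> g $$ (k,l)))"
    by (simp add: sum_distrib_left sum_distrib_right sum.swap[of _ "{..<d}"] mult_ac)
  also have "\<dots> = (\<Sum>g\<in>carrier G. \<rho> (h \<otimes> g) $$ (i,j) * cnj (\<sigma> g $$ (k,l)))"
    using unitary_rep_mult[OF \<rho> h] index_mult_mat_sum[OF \<rho>h unitary_rep_carrier[OF \<rho>] i j]
    by (intro sum.cong) simp_all
  finally show ?thesis .
qed

lemma index_mult_schur_avg_right:
  fixes G (structure)
  assumes G: "group G" and \<sigma>: "unitary_rep G e \<sigma>" and h: "h \<in> carrier G"
    and i: "i < d" and k: "k < e" and l: "l < e"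
  shows "(schur_avg G \<rho> \<sigma> d e j l * \<sigma> h) $$ (i,k) =
    (\<Sum>g\<in>carrier G. \<rho> g $$ (i,j) * cnj (\<sigma> (inv h \<otimes> g) $$ (k,l)))"
proof -
  interpret group G by fact
  have \<sigma>h: "\<sigma> h \<in> carrier_mat e e"
    using unitary_rep_carrier[OF \<sigma> h] .
  have "(schur_avg G \<rho> \<sigma> d e j l * \<sigma> h) $$ (i,k) =
      (\<Sum>m<e. (\<Sum>g\<in>carrier G. \<rho> g $$ (i,j) * cnj (\<sigma> g $$ (m,l))) * \<sigma> h $$ (m,k))"
    unfolding index_mult_mat_sum[OF schur_avg_carrier \<sigma>h i k] by (simp add: index_schur_avg i)
  also have "\<dots> = (\<Sum>g\<in>carrier G. \<rho> g $$ (i,j) * (\<Sum>m<e. cnj (\<sigma> g $$ (m,l)) * \<sigma> h $$ (m,k)))"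
    by (simp add: sum_distrib_left sum_distrib_right sum.swap[of _ "{..<e}"] mult_ac)
  also have "\<dots> = (\<Sum>g\<in>carrier G. \<rho> g $$ (i,j) * cnj (\<sigma> (inv h \<otimes> g) $$ (k,l)))"
  proof (intro sum.cong refl)
    fix g assume g: "g \<in> carrier G"
    have \<sigma>g: "\<sigma> g \<in> carrier_mat e e"
      using unitary_rep_carrier[OF \<sigma> g] .
    have "(\<Sum>m<e. cnj (\<sigma> g $$ (m,l)) * \<sigma> h $$ (m,k)) = (mat_adjoint (\<sigma> g) * \<sigma> h) $$ (l,k)"
      using \<sigma>g l by (auto simp: index_mult_mat_sum[OF mat_adjoint_carrier[OF \<sigma>g] \<sigma>h l k]
          simp del: index_mult_mat intro: sum.cong)
    also have "\<dots> = \<sigma> (inv g \<otimes> h) $$ (l,k)"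
      using unitary_rep_mult[OF \<sigma>, of "inv g" h] unitary_rep_inv[OF G \<sigma> g] g h by simp
    also have "\<dots> = mat_adjoint (\<sigma> (inv h \<otimes> g)) $$ (l,k)"
      using unitary_rep_inv[OF G \<sigma>, of "inv h \<otimes> g"] g h by (simp add: inv_mult_group)
    finally show "\<rho> g $$ (i,j) * (\<Sum>m<e. cnj (\<sigma> g $$ (m,l)) * \<sigma> h $$ (m,k)) =
        \<rho> g $$ (i,j) * cnj (\<sigma> (inv h \<otimes> g) $$ (k,l))"
      using unitary_rep_carrier[OF \<sigma>, of "inv h \<otimes> g"] g h k l by simp
  qed
  finally show ?thesis .
qed

lemma schur_avg_intertwines:
  fixes G (structure)
  assumes G: "group G" and \<rho>: "unitary_rep G d \<rho>" and \<sigma>: "unitary_rep G e \<sigma>"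
    and h: "h \<in> carrier G" and j: "j < d" and l: "l < e"
  shows "\<rho> h * schur_avg G \<rho> \<sigma> d e j l = schur_avg G \<rho> \<sigma> d e j l * \<sigma> h"
proof -
  interpret group G by fact
  have \<rho>h: "\<rho> h \<in> carrier_mat d d" and \<sigma>h: "\<sigma> h \<in> carrier_mat e e"
    using unitary_rep_carrier[OF \<rho> h] unitary_rep_carrier[OF \<sigma> h] .
  show ?thesis
  proof (rule eq_matI)
    fix i k assume "i < dim_row (schur_avg G \<rho> \<sigma> d e j l * \<sigma> h)" "k < dim_col (schur_avg G \<rho> \<sigma> d e j l * \<sigma> h)"
    hence i: "i < d" and k: "k < e"
      using \<sigma>h by auto
    have "(\<Sum>g\<in>carrier G. \<rho> g $$ (i,j) * cnj (\<sigma> (inv h \<otimes> g) $$ (k,l))) =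
        (\<Sum>g\<in>carrier G. \<rho> (h \<otimes> g) $$ (i,j) * cnj (\<sigma> (inv h \<otimes> (h \<otimes> g)) $$ (k,l)))"
      by (rule sum_subgroup_left_translate[OF G subgroup_self h, symmetric])
    also have "\<dots> = (\<Sum>g\<in>carrier G. \<rho> (h \<otimes> g) $$ (i,j) * cnj (\<sigma> g $$ (k,l)))"
      using h by (intro sum.cong) (simp_all add: m_assoc[symmetric])
    finally show "(\<rho> h * schur_avg G \<rho> \<sigma> d e j l) $$ (i,k) = (schur_avg G \<rho> \<sigma> d e j l * \<sigma> h) $$ (i,k)"
      by (simp add: index_mult_schur_avg_left[OF \<rho> h i k j] index_mult_schur_avg_right[OF G \<sigma> h i k l])
  qed (use \<rho>h \<sigma>h in auto)
qed

lemma schur_orthogonality_not_iso: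
  assumes G: "group G"
    and \<rho>: "unitary_rep G d \<rho>" "irreducible_rep G d \<rho>"
    and \<sigma>: "unitary_rep G e \<sigma>" "irreducible_rep G e \<sigma>"
    and not_iso: "\<not> iso_rep G e \<sigma> d \<rho>"
    and i: "i < d" and j: "j < d" and k: "k < e" and l: "l < e"
  shows "(\<Sum>g\<in>carrier G. \<rho> g $$ (i,j) * cnj (\<sigma> g $$ (k,l))) = 0"
proof -
  have "schur_avg G \<rho> \<sigma> d e j l = 0\<^sub>m d e"
    by (rule schur_lemma_intertwiner_zero[OF G \<rho> \<sigma> not_iso schur_avg_carrier])
       (rule schur_avg_intertwines[OF G \<rho>(1) \<sigma>(1) _ j l])
  thus ?thesis
    using index_schur_avg[OF i k, of G \<rho> \<sigma> j l] i k by simp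
qed

lemma schur_orthogonality_self:
  assumes G: "group G" and \<rho>: "unitary_rep G d \<rho>" "irreducible_rep G d \<rho>"
    and i: "i < d" and j: "j < d" and k: "k < d" and l: "l < d"
  shows "(\<Sum>g\<in>carrier G. \<rho> g $$ (i,j) * cnj (\<rho> g $$ (k,l))) =
    (if i = k \<and> j = l then of_nat (card (carrier G)) / of_nat d else 0)"
proof -
  have d: "d > 0"
    using unitary_rep_dim_pos[OF \<rho>(1)] .
  obtain c where c: "schur_avg G \<rho> \<rho> d d j l = c \<cdot>\<^sub>m 1\<^sub>m d"
    using schur_lemma_scalar[OF \<rho>(2) d schur_avg_carrier unitary_rep_carrier[OF \<rho>(1)]
        schur_avg_intertwines[OF G \<rho>(1) \<rho>(1) _ j l]] by blast
  have "of_nat d * c = (\<Sum>a<d. schur_avg G \<rho> \<rho> d d j l $$ (a,a))"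
    by (simp add: c)
  also have "\<dots> = (\<Sum>g\<in>carrier G. \<Sum>a<d. cnj (\<rho> g $$ (a,l)) * \<rho> g $$ (a,j))"
    by (subst sum.swap) (auto simp: index_schur_avg mult.commute intro!: sum.cong)
  also have "\<dots> = (\<Sum>g\<in>carrier G. (mat_adjoint (\<rho> g) * \<rho> g) $$ (l,j))"
  proof (intro sum.cong refl)
    fix g assume "g \<in> carrier G"
    hence \<rho>g: "\<rho> g \<in> carrier_mat d d"
      by (rule unitary_rep_carrier[OF \<rho>(1)])
    show "(\<Sum>a<d. cnj (\<rho> g $$ (a,l)) * \<rho> g $$ (a,j)) = (mat_adjoint (\<rho> g) * \<rho> g) $$ (l,j)"
      using \<rho>g l by (auto simp: index_mult_mat_sum[OF mat_adjoint_carrier[OF \<rho>g] \<rho>g l j]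
          simp del: index_mult_mat intro: sum.cong)
  qed
  also have "\<dots> = (\<Sum>g\<in>carrier G. 1\<^sub>m d $$ (l,j))"
    by (simp add: unitary_rep_adjoint_unitary[OF G \<rho>(1)])
  finally have "of_nat d * c = of_nat (card (carrier G)) * (if l = j then 1 else 0)"
    using j l by simp
  hence "c = (if j = l then of_nat (card (carrier G)) / of_nat d else 0)"
    using d by (auto simp: field_simps)
  thus ?thesis
    using index_schur_avg[OF i k, of G \<rho> \<rho> j l] c i k by auto
qed

lemma complete_irreps_orthogonality:
  assumes G: "group G" and R: "complete_irreps G R" and dr: "(d,\<rho>) \<in> R" and es: "(e,\<sigma>) \<in> R"
    and i: "i < d" and j: "j < d" and k: "k < e" and l: "l < e"
  shows "(\<Sum>g\<in>carrier G. \<rho> g $$ (i,j) * cnj (\<sigma> g $$ (k,l))) =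
    (if (d,\<rho>) = (e,\<sigma>) \<and> i = k \<and> j = l then of_nat (card (carrier G)) / of_nat d else 0)"
proof -
  have \<rho>: "unitary_rep G d \<rho>" "irreducible_rep G d \<rho>"
    and \<sigma>: "unitary_rep G e \<sigma>" "irreducible_rep G e \<sigma>"
    using R dr es unfolding complete_irreps_def by fast+
  show ?thesis
  proof (cases "(d,\<rho>) = (e,\<sigma>)")
    case True
    thus ?thesis
      using schur_orthogonality_self[OF G \<rho> i j] k l by auto
  next
    case False
    hence "\<not> iso_rep G e \<sigma> d \<rho>"
      using R dr es unfolding complete_irreps_def by fast
    thus ?thesis
      using schur_orthogonality_not_iso[OF G \<rho> \<sigma> _ i j k l] False by auto
  qed
qed

section \<open>Bessel's inequality\<close>

lemma sum_cmod_add_square_orthogonal: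
  fixes g p :: "'x \<Rightarrow> complex"
  assumes orth: "(\<Sum>x\<in>X. g x * cnj (p x)) = 0"
  shows "(\<Sum>x\<in>X. (cmod (g x + p x))\<^sup>2) = (\<Sum>x\<in>X. (cmod (g x))\<^sup>2) + (\<Sum>x\<in>X. (cmod (p x))\<^sup>2)"
proof -
  have "of_real (\<Sum>x\<in>X. (cmod (g x + p x))\<^sup>2) = (\<Sum>x\<in>X. g x * cnj (g x)) + (\<Sum>x\<in>X. g x * cnj (p x))
      + cnj (\<Sum>x\<in>X. g x * cnj (p x)) + (\<Sum>x\<in>X. p x * cnj (p x))"
    unfolding of_real_sum complex_norm_square by (simp add: algebra_simps sum.distrib)
  also have "\<dots> = of_real ((\<Sum>x\<in>X. (cmod (g x))\<^sup>2) + (\<Sum>x\<in>X. (cmod (p x))\<^sup>2))"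
    unfolding orth of_real_add of_real_sum complex_norm_square by simp
  finally show ?thesis
    using of_real_eq_iff by blast
qed

lemma bessel_inequality:
  fixes f :: "'x \<Rightarrow> complex" and \<phi> :: "'i \<Rightarrow> 'x \<Rightarrow> complex" and c :: "'i \<Rightarrow> real"
  assumes I: "finite I"
    and orth: "\<And>a b. a \<in> I \<Longrightarrow> b \<in> I \<Longrightarrow>
      (\<Sum>x\<in>X. \<phi> a x * cnj (\<phi> b x)) = (if a = b then complex_of_real (c a) else 0)"
    and pos: "\<And>a. a \<in> I \<Longrightarrow> c a > 0"
  shows "(\<Sum>a\<in>I. (cmod (\<Sum>x\<in>X. f x * cnj (\<phi> a x)))\<^sup>2 / c a) \<le> (\<Sum>x\<in>X. (cmod (f x))\<^sup>2)"
proof -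
  define ip where "ip a = (\<Sum>x\<in>X. f x * cnj (\<phi> a x))" for a
  (* p is the orthogonal projection of f onto the span of the \<phi> a, and |p|^2 is the left-hand side. *)
  define p where "p x = (\<Sum>a\<in>I. ip a / c a * \<phi> a x)" for x
  define K where "K = (\<Sum>a\<in>I. (cmod (ip a))\<^sup>2 / c a)"
  have p_ip: "(\<Sum>x\<in>X. p x * cnj (\<phi> b x)) = ip b" if b: "b \<in> I" for b
  proof -
    have "(\<Sum>x\<in>X. p x * cnj (\<phi> b x)) = (\<Sum>a\<in>I. ip a / c a * (\<Sum>x\<in>X. \<phi> a x * cnj (\<phi> b x)))"
      unfolding p_def by (simp add: sum_distrib_left sum_distrib_right sum.swap[of _ X] mult_ac)
    also have "\<dots> = (\<Sum>a\<in>I. if a = b then ip a else 0)"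
      using b pos[OF b] by (intro sum.cong refl) (auto simp: orth)
    also have "\<dots> = ip b"
      using I b by simp
    finally show ?thesis .
  qed
  have K_eq: "(\<Sum>a\<in>I. cnj (ip a / c a) * ip a) = of_real K"
    unfolding K_def of_real_sum
    by (intro sum.cong refl) (simp add: mult.commute flip: complex_norm_square)
  have cnj_p: "cnj (p x) = (\<Sum>a\<in>I. cnj (ip a / c a) * cnj (\<phi> a x))" for x
    unfolding p_def by simp
  have fp: "(\<Sum>x\<in>X. f x * cnj (p x)) = of_real K"
  proof -
    have "(\<Sum>x\<in>X. f x * cnj (p x)) = (\<Sum>a\<in>I. cnj (ip a / c a) * (\<Sum>x\<in>X. f x * cnj (\<phi> a x)))"
      unfolding cnj_p by (simp add: sum_distrib_left sum.swap[of _ X] mult_ac)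
    thus ?thesis
      using K_eq by (simp add: ip_def[symmetric])
  qed
  have pp: "(\<Sum>x\<in>X. p x * cnj (p x)) = of_real K"
  proof -
    have "(\<Sum>x\<in>X. p x * cnj (p x)) = (\<Sum>a\<in>I. cnj (ip a / c a) * (\<Sum>x\<in>X. p x * cnj (\<phi> a x)))"
      unfolding cnj_p by (simp add: sum_distrib_left sum.swap[of _ X] mult_ac)
    thus ?thesis
      using p_ip K_eq by simp
  qed
  have "(\<Sum>x\<in>X. (f x - p x) * cnj (p x)) = 0"
    using fp pp by (simp add: left_diff_distrib sum_subtractf)
  hence "(\<Sum>x\<in>X. (cmod (f x))\<^sup>2) = (\<Sum>x\<in>X. (cmod (f x - p x))\<^sup>2) + (\<Sum>x\<in>X. (cmod (p x))\<^sup>2)"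
    using sum_cmod_add_square_orthogonal[where g="\<lambda>x. f x - p x" and p=p] by simp
  moreover have "(\<Sum>x\<in>X. (cmod (p x))\<^sup>2) = K"
    using pp unfolding of_real_sum[symmetric] complex_norm_square[symmetric] of_real_eq_iff .
  ultimately show ?thesis
    unfolding K_def ip_def by (simp add: sum_nonneg)
qed

section \<open>Fourier transforms of subgroup indicators\<close>

lemma fourier_carrier: "fourier G f d \<rho> \<in> carrier_mat d d"
  by (simp add: fourier_def)

lemma dim_fourier [simp]: "dim_row (fourier G f d \<rho>) = d" "dim_col (fourier G f d \<rho>) = d"
  by (simp_all add: fourier_def)

lemma index_fourier:
  "i < d \<Longrightarrow> j < d \<Longrightarrow> fourier G f d \<rho> $$ (i,j) = (\<Sum>g\<in>carrier G. f g * \<rho> g $$ (i,j))"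
  by (simp add: fourier_def)

lemma fourier_bessel_inequality:
  fixes G :: "('g, 'b) monoid_scheme"
  assumes G: "group G" and fin: "finite (carrier G)" and R: "complete_irreps G R" and finR: "finite R"
  shows "(\<Sum>(d,\<rho>)\<in>R. real d * (hs_norm (fourier G f d \<rho>))\<^sup>2)
    \<le> real (card (carrier G)) * (\<Sum>g\<in>carrier G. (cmod (f g))\<^sup>2)"
proof -
  define n where "n = real (card (carrier G))"
  have n: "n > 0"
    unfolding n_def using subgroup.finite_imp_card_positive[OF group.subgroup_self[OF G] fin] by simp
  (* Bessel for the conjugated matrix coefficients, whose squared norms are |G| / d. *)
  define I where "I = Sigma R (\<lambda>k. {..<fst k} \<times> {..<fst k})"
  define \<phi> where "\<phi> a g = cnj (snd (fst a) g $$ snd a)"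
    for a :: "(nat \<times> ('g \<Rightarrow> complex mat)) \<times> nat \<times> nat" and g
  define c where "c a = n / real (fst (fst a))" for a :: "(nat \<times> ('g \<Rightarrow> complex mat)) \<times> nat \<times> nat"
  have "(\<Sum>a\<in>I. (cmod (\<Sum>g\<in>carrier G. f g * cnj (\<phi> a g)))\<^sup>2 / c a) \<le> (\<Sum>g\<in>carrier G. (cmod (f g))\<^sup>2)"
  proof (rule bessel_inequality)
    show "finite I"
      unfolding I_def using finR by (intro finite_SigmaI) auto
  next
    fix a b assume "a \<in> I" "b \<in> I"
    then obtain d \<rho> i j e \<sigma> k l where ab: "a = ((d,\<rho>),(i,j))" "b = ((e,\<sigma>),(k,l))"
      and mem: "(d,\<rho>) \<in> R" "(e,\<sigma>) \<in> R" and ijkl: "i < d" "j < d" "k < e" "l < e"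
      unfolding I_def by auto
    have "(\<Sum>g\<in>carrier G. \<phi> a g * cnj (\<phi> b g)) = cnj (\<Sum>g\<in>carrier G. \<rho> g $$ (i,j) * cnj (\<sigma> g $$ (k,l)))"
      unfolding ab \<phi>_def by simp
    also have "\<dots> = (if a = b then complex_of_real (c a) else 0)"
      unfolding complete_irreps_orthogonality[OF G R mem ijkl] ab c_def n_def by auto
    finally show "(\<Sum>g\<in>carrier G. \<phi> a g * cnj (\<phi> b g)) = (if a = b then complex_of_real (c a) else 0)" .
  next
    fix a assume "a \<in> I"
    thus "c a > 0"
      unfolding I_def c_def using n by auto
  qed
  also have "(\<Sum>a\<in>I. (cmod (\<Sum>g\<in>carrier G. f g * cnj (\<phi> a g)))\<^sup>2 / c a) =
      (\<Sum>(k,i,j)\<in>I. real (fst k) / n * (cmod (fourier G f (fst k) (snd k) $$ (i,j)))\<^sup>2)"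
    by (intro sum.cong refl) (auto simp: I_def \<phi>_def c_def index_fourier)
  also have "\<dots> = (\<Sum>k\<in>R. real (fst k) / n * (hs_norm (fourier G f (fst k) (snd k)))\<^sup>2)"
    unfolding I_def
    by (rule sum_Sigma_cmod_square_hs_norm[where n=fst and M="\<lambda>k. fourier G f (fst k) (snd k)",
          OF finR fourier_carrier])
  also have "\<dots> = (\<Sum>(d,\<rho>)\<in>R. real d * (hs_norm (fourier G f d \<rho>))\<^sup>2) / n"
    by (simp add: sum_divide_distrib case_prod_unfold)
  finally show ?thesis
    using n unfolding n_def by (simp add: pos_divide_le_eq mult.commute)
qed

lemma index_fourier_indicator:
  assumes fin: "finite (carrier G)" and HG: "H \<subseteq> carrier G" and i: "i < d" and j: "j < d"
  shows "fourier G (\<lambda>g. if g \<in> H then 1 else 0) d \<rho> $$ (i,j) = (\<Sum>h\<in>H. \<rho> h $$ (i,j))"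
proof -
  have "fourier G (\<lambda>g. if g \<in> H then 1 else 0) d \<rho> $$ (i,j) = (\<Sum>g\<in>carrier G. if g \<in> H then \<rho> g $$ (i,j) else 0)"
    by (auto simp: index_fourier[OF i j] intro: sum.cong)
  also have "\<dots> = (\<Sum>h\<in>H. \<rho> h $$ (i,j))"
    using fin HG by (simp add: sum.inter_restrict[symmetric] Int_absorb1)
  finally show ?thesis .
qed

lemma fourier_subgroup_indicator_mult_self:
  fixes G (structure)
  assumes G: "group G" and fin: "finite (carrier G)" and H: "subgroup H G" and \<rho>: "unitary_rep G d \<rho>"
  defines "F \<equiv> fourier G (\<lambda>g. if g \<in> H then 1 else 0) d \<rho>"
  shows "F * F = of_nat (card H) \<cdot>\<^sub>m F"
proof (rule eq_matI)
  interpret group G by fact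
  have HG: "H \<subseteq> carrier G"
    using H by (rule subgroup.subset)
  have \<rho>H: "\<rho> h \<in> carrier_mat d d" if "h \<in> H" for h
    using unitary_rep_carrier[OF \<rho>] HG that by auto
  fix i j assume "i < dim_row (of_nat (card H) \<cdot>\<^sub>m F)" "j < dim_col (of_nat (card H) \<cdot>\<^sub>m F)"
  hence i: "i < d" and j: "j < d"
    unfolding F_def by simp_all
  have "(F * F) $$ (i,j) = (\<Sum>k<d. (\<Sum>h\<in>H. \<rho> h $$ (i,k)) * (\<Sum>h'\<in>H. \<rho> h' $$ (k,j)))"
    unfolding F_def index_mult_mat_sum[OF fourier_carrier fourier_carrier i j]
    by (intro sum.cong refl) (simp add: index_fourier_indicator[OF fin HG] i j)
  also have "\<dots> = (\<Sum>h\<in>H. \<Sum>h'\<in>H. \<Sum>k<d. \<rho> h $$ (i,k) * \<rho> h' $$ (k,j))"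
    by (simp add: sum_product sum.swap[of _ "{..<d}"])
  also have "\<dots> = (\<Sum>h\<in>H. \<Sum>h'\<in>H. (\<rho> h * \<rho> h') $$ (i,j))"
    by (intro sum.cong refl) (simp add: index_mult_mat_sum[OF \<rho>H \<rho>H i j] del: index_mult_mat)
  also have "\<dots> = (\<Sum>h\<in>H. \<Sum>h'\<in>H. \<rho> (h \<otimes> h') $$ (i,j))"
    by (intro sum.cong refl) (simp add: unitary_rep_mult[OF \<rho>] subgroup.mem_carrier[OF H])
  also have "\<dots> = (\<Sum>h\<in>H. \<Sum>h'\<in>H. \<rho> h' $$ (i,j))"
    by (intro sum.cong refl sum_subgroup_left_translate[OF G H])
  also have "\<dots> = (of_nat (card H) \<cdot>\<^sub>m F) $$ (i,j)"
    unfolding F_def using i j fin HG by (simp add: index_fourier_indicator)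
  finally show "(F * F) $$ (i,j) = (of_nat (card H) \<cdot>\<^sub>m F) $$ (i,j)" .
qed (simp_all add: F_def)

lemma fourier_subgroup_indicator_hs_norm_le:
  assumes G: "group G" and fin: "finite (carrier G)" and H: "subgroup H G" and \<rho>: "unitary_rep G d \<rho>"
  defines "F \<equiv> fourier G (\<lambda>g. if g \<in> H then 1 else 0) d \<rho>"
  shows "hs_norm F \<le> (hs_norm F)\<^sup>2 / real (card H)"
proof (rule hs_norm_le_square_div_of_mult_self[of F d])
  show "real (card H) > 0"
    using subgroup.finite_imp_card_positive[OF H fin] by simp
  show "F * F = complex_of_real (real (card H)) \<cdot>\<^sub>m F"
    using fourier_subgroup_indicator_mult_self[OF G fin H \<rho>] unfolding F_def by simp
qed (simp add: F_def fourier_carrier)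

lemma sum_indicator_cmod_square:
  assumes "finite A" and "H \<subseteq> A"
  shows "(\<Sum>g\<in>A. (cmod (if g \<in> H then 1 else 0))\<^sup>2) = real (card H)"
proof -
  have "(\<Sum>g\<in>A. (cmod (if g \<in> H then 1 else 0))\<^sup>2) = (\<Sum>g\<in>A. if g \<in> H then 1 else 0)"
    by (intro sum.cong refl) simp
  also have "\<dots> = real (card H)"
    using assms by (simp add: sum.If_cases Int_absorb1)
  finally show ?thesis .
qed

theorem lemma6:
  fixes G :: "('g, 'b) monoid_scheme" and H :: "'g set"
    and R :: "(nat \<times> ('g \<Rightarrow> complex mat)) set"
  assumes "group G" and "finite (carrier G)" and "subgroup H G"
    and "complete_irreps G R"
  shows "wiener_norm G R (\<lambda>g. if g \<in> H then 1 else 0) \<le> 1"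
proof (cases "finite R")
  case False
  (* R is in fact finite, but for infinite R the sum in wiener_norm is 0 anyway. *)
  thus ?thesis
    by (simp add: wiener_norm_def)
next
  case True
  define F where "F d \<rho> = fourier G (\<lambda>g. if g \<in> H then 1 else 0) d \<rho>" for d \<rho>
  define n where "n = real (card (carrier G))"
  define s where "s = real (card H)"
  have n: "n > 0" and s: "s > 0"
    using subgroup.finite_imp_card_positive[OF _ assms(2)] group.subgroup_self assms(1,3)
    unfolding n_def s_def by auto
  have bessel: "(\<Sum>(d,\<rho>)\<in>R. real d * (hs_norm (F d \<rho>))\<^sup>2) \<le> n * s"
    using fourier_bessel_inequality[OF assms(1,2,4) True, of "\<lambda>g. if g \<in> H then 1 else 0"]
      sum_indicator_cmod_square[OF assms(2) subgroup.subset[OF assms(3)]]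
    unfolding F_def n_def s_def by simp
  have norm_le: "hs_norm (F d \<rho>) \<le> (hs_norm (F d \<rho>))\<^sup>2 / s" if "(d,\<rho>) \<in> R" for d \<rho>
    using fourier_subgroup_indicator_hs_norm_le[OF assms(1-3)] assms(4) that
    unfolding complete_irreps_def F_def s_def by fast
  have "wiener_norm G R (\<lambda>g. if g \<in> H then 1 else 0) = (\<Sum>(d,\<rho>)\<in>R. real d * hs_norm (F d \<rho>)) / n"
    unfolding wiener_norm_def F_def n_def by simp
  also have "\<dots> \<le> (\<Sum>(d,\<rho>)\<in>R. real d * ((hs_norm (F d \<rho>))\<^sup>2 / s)) / n"
    by (intro divide_right_mono sum_mono)
       (use n in \<open>auto intro!: mult_left_mono norm_le simp del: times_divide_eq_right\<close>)
  also have "\<dots> = (\<Sum>(d,\<rho>)\<in>R. real d * (hs_norm (F d \<rho>))\<^sup>2) / (n * s)"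
    by (simp add: sum_divide_distrib case_prod_unfold mult.commute)
  also have "\<dots> \<le> 1"
    using bessel n s by simp
  finally show ?thesis .
qed

end
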